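(* Let $\mathcal{V}$ be a variety of algebras, $\mathcal{C}$ a full subcategory of the category of finitely generated free $\mathcal{V}$-algebras containing the free monogenic algebra $A_0$ on $x_0$, and $\Phi$ an automorphism of $\mathcal{C}$ with main function $(s^\Phi_A)$. Let $A$ be a $\mathcal{C}$-algebra and $X$ a basis of $\Phi(A)$. Then either no element of $X$ belongs to $s^\Phi_A(|A|)$, or $s^\Phi_A:|A|\to|\Phi(A)|$ is surjective.
   Context: Morphisms of $\mathcal{C}$ are all homomorphisms. For $a\in A$, $\alpha^A_a:A_0\to A$ is the homomorphism with $x_0\mapsto a$. Let $\eta^\Phi_0:\Phi^{-1}(A_0)\to A_0$ be the homomorphism sending every element of a fixed basis of $\Phi^{-1}(A_0)$ to $x_0$ (the identity if $\Phi(A_0)=A_0$), and $\eta^\Phi=\Phi(\eta^\Phi_0):A_0\to\Phi(A_0)$. The main function is $s^\Phi_A:|A|\to|\Phi(A)|$, $s^\Phi_A(a)=\Phi(\alpha^A_a)(\eta^\Phi(x_0))$. *)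

theory Defs
  imports Main "HOL-Library.FuncSet"
begin

text \<open>Algebras have carriers inside a fixed universe type 'u; operations are
  total functions on argument lists, only their values on lists of the
  correct length with entries in the carrier matter.\<close>

datatype ('f,'v) trm = Var 'v | App 'f "('f,'v) trm list"

record ('f,'u) alg =
  carrier :: "'u set"
  ops :: "'f \<Rightarrow> 'u list \<Rightarrow> 'u"

fun wf_trm :: "('f \<Rightarrow> nat) \<Rightarrow> ('f,'v) trm \<Rightarrow> bool" where
  "wf_trm ar (Var v) = True"
| "wf_trm ar (App f ts) = (length ts = ar f \<and> (\<forall>t\<in>set ts. wf_trm ar t))"

fun eval :: "('f,'u) alg \<Rightarrow> ('v \<Rightarrow> 'u) \<Rightarrow> ('f,'v) trm \<Rightarrow> 'u" where
  "eval A \<rho> (Var v) = \<rho> v"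
| "eval A \<rho> (App f ts) = ops A f (map (eval A \<rho>) ts)"

definition is_alg :: "('f \<Rightarrow> nat) \<Rightarrow> ('f,'u) alg \<Rightarrow> bool" where
  "is_alg ar A \<longleftrightarrow>
     (\<forall>f xs. length xs = ar f \<and> set xs \<subseteq> carrier A \<longrightarrow> ops A f xs \<in> carrier A)"

text \<open>A variety is given (Birkhoff) by a set E of identities between
  well-formed terms in the variables nat.\<close>
definition is_variety :: "('f \<Rightarrow> nat) \<Rightarrow> (('f,nat) trm \<times> ('f,nat) trm) set \<Rightarrow> bool" where
  "is_variety ar E \<longleftrightarrow> (\<forall>(l,r)\<in>E. wf_trm ar l \<and> wf_trm ar r)"

definition in_variety ::
  "('f \<Rightarrow> nat) \<Rightarrow> (('f,nat) trm \<times> ('f,nat) trm) set \<Rightarrow> ('f,'u) alg \<Rightarrow> bool" where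
  "in_variety ar E A \<longleftrightarrow> is_alg ar A \<and>
     (\<forall>(l,r)\<in>E. \<forall>\<rho>. (\<forall>v. \<rho> v \<in> carrier A) \<longrightarrow> eval A \<rho> l = eval A \<rho> r)"

definition hom :: "('f \<Rightarrow> nat) \<Rightarrow> ('f,'u) alg \<Rightarrow> ('f,'u) alg \<Rightarrow> ('u \<Rightarrow> 'u) \<Rightarrow> bool" where
  "hom ar A B h \<longleftrightarrow> h \<in> carrier A \<rightarrow> carrier B \<and> h \<in> extensional (carrier A) \<and>
     (\<forall>f xs. length xs = ar f \<and> set xs \<subseteq> carrier A \<longrightarrow> h (ops A f xs) = ops B f (map h xs))"

definition free_on ::
  "('f \<Rightarrow> nat) \<Rightarrow> (('f,nat) trm \<times> ('f,nat) trm) set \<Rightarrow> ('f,'u) alg \<Rightarrow> 'u set \<Rightarrow> bool" where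
  "free_on ar E A X \<longleftrightarrow> in_variety ar E A \<and> X \<subseteq> carrier A \<and>
     (\<forall>B. in_variety ar E B \<longrightarrow>
        (\<forall>g \<in> X \<rightarrow> carrier B. \<exists>!h. hom ar A B h \<and> (\<forall>x\<in>X. h x = g x)))"

definition fg_free ::
  "('f \<Rightarrow> nat) \<Rightarrow> (('f,nat) trm \<times> ('f,nat) trm) set \<Rightarrow> ('f,'u) alg \<Rightarrow> bool" where
  "fg_free ar E A \<longleftrightarrow> (\<exists>X. finite X \<and> free_on ar E A X)"

definition is_functor ::
  "('f \<Rightarrow> nat) \<Rightarrow> ('f,'u) alg set \<Rightarrow> (('f,'u) alg \<Rightarrow> ('f,'u) alg)
   \<Rightarrow> (('f,'u) alg \<Rightarrow> ('f,'u) alg \<Rightarrow> ('u \<Rightarrow> 'u) \<Rightarrow> ('u \<Rightarrow> 'u)) \<Rightarrow> bool" where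
  "is_functor ar Obj FO FM \<longleftrightarrow>
     (\<forall>A\<in>Obj. FO A \<in> Obj) \<and>
     (\<forall>A\<in>Obj. \<forall>B\<in>Obj. \<forall>h. hom ar A B h \<longrightarrow> hom ar (FO A) (FO B) (FM A B h)) \<and>
     (\<forall>A\<in>Obj. FM A A (restrict id (carrier A)) = restrict id (carrier (FO A))) \<and>
     (\<forall>A\<in>Obj. \<forall>B\<in>Obj. \<forall>C\<in>Obj. \<forall>g h. hom ar A B h \<and> hom ar B C g \<longrightarrow>
        FM A C (compose (carrier A) g h) = compose (carrier (FO A)) (FM B C g) (FM A B h))"

definition is_automorphism ::
  "('f \<Rightarrow> nat) \<Rightarrow> ('f,'u) alg set
   \<Rightarrow> (('f,'u) alg \<Rightarrow> ('f,'u) alg) \<Rightarrow> (('f,'u) alg \<Rightarrow> ('f,'u) alg \<Rightarrow> ('u \<Rightarrow> 'u) \<Rightarrow> ('u \<Rightarrow> 'u))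
   \<Rightarrow> (('f,'u) alg \<Rightarrow> ('f,'u) alg) \<Rightarrow> (('f,'u) alg \<Rightarrow> ('f,'u) alg \<Rightarrow> ('u \<Rightarrow> 'u) \<Rightarrow> ('u \<Rightarrow> 'u))
   \<Rightarrow> bool" where
  "is_automorphism ar Obj FO FM GO GM \<longleftrightarrow>
     is_functor ar Obj FO FM \<and> is_functor ar Obj GO GM \<and>
     (\<forall>A\<in>Obj. GO (FO A) = A \<and> FO (GO A) = A) \<and>
     (\<forall>A\<in>Obj. \<forall>B\<in>Obj. \<forall>h. hom ar A B h \<longrightarrow>
        GM (FO A) (FO B) (FM A B h) = h \<and> FM (GO A) (GO B) (GM A B h) = h)"

definition alpha :: "('f \<Rightarrow> nat) \<Rightarrow> ('f,'u) alg \<Rightarrow> 'u \<Rightarrow> ('f,'u) alg \<Rightarrow> 'u \<Rightarrow> ('u \<Rightarrow> 'u)" where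
  "alpha ar A0 x0 A a = (THE h. hom ar A0 A h \<and> h x0 = a)"

definition eta0 :: "('f \<Rightarrow> nat) \<Rightarrow> ('f,'u) alg \<Rightarrow> 'u \<Rightarrow> ('f,'u) alg \<Rightarrow> 'u set \<Rightarrow> ('u \<Rightarrow> 'u)" where
  "eta0 ar A0 x0 B Y = (THE h. hom ar B A0 h \<and> (\<forall>y\<in>Y. h y = x0))"

definition main_fun ::
  "('f \<Rightarrow> nat) \<Rightarrow> ('f,'u) alg \<Rightarrow> 'u
   \<Rightarrow> (('f,'u) alg \<Rightarrow> ('f,'u) alg \<Rightarrow> ('u \<Rightarrow> 'u) \<Rightarrow> ('u \<Rightarrow> 'u))
   \<Rightarrow> (('f,'u) alg \<Rightarrow> ('f,'u) alg) \<Rightarrow> 'u set \<Rightarrow> ('f,'u) alg \<Rightarrow> 'u \<Rightarrow> 'u" where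
  "main_fun ar A0 x0 FM GO Y A a =
     (let eta = FM (GO A0) A0 (eta0 ar A0 x0 (GO A0) Y)
      in FM A0 A (alpha ar A0 x0 A a) (eta x0))"

end

theory Submission
  imports Defs
begin

text \<open>The main function is natural: for every homomorphism h : A \<rightarrow> B one has
  s_B (h a) = \<Phi>(h) (s_A a), because \<alpha>_(h a) = h \<circ> \<alpha>_a. Now suppose s_A a \<in> X and let
  b \<in> \<Phi>(A). The endomorphism \<gamma> of the free algebra \<Phi>(A) that maps all of X to b
  is \<Phi>(h) for some endomorphism h of A, since \<Phi> is full; hence
  s_A (h a) = \<gamma> (s_A a) = b, and s_A is onto.\<close>

lemma hom_closed: "hom ar A B h \<Longrightarrow> a \<in> carrier A \<Longrightarrow> h a \<in> carrier B"
  by (auto simp: hom_def)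

lemma hom_compose:
  assumes "is_alg ar A" "hom ar A B f" "hom ar B C g"
  shows "hom ar A C (compose (carrier A) g f)"
proof -
  have "compose (carrier A) g f (ops A h xs) = ops C h (map (compose (carrier A) g f) xs)"
    if xs: "length xs = ar h" "set xs \<subseteq> carrier A" for h xs
  proof -
    have "ops A h xs \<in> carrier A"
      using assms(1) xs by (auto simp: is_alg_def)
    then have "compose (carrier A) g f (ops A h xs) = g (f (ops A h xs))"
      by (simp add: compose_def)
    also have "\<dots> = g (ops B h (map f xs))"
      using assms(2) xs by (simp add: hom_def)
    also have "\<dots> = ops C h (map g (map f xs))"
    proof -
      have "set (map f xs) \<subseteq> carrier B"
        using assms(2) xs(2) by (auto simp: hom_def)
      then show ?thesis
        using assms(3) xs(1) by (simp add: hom_def)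
    qed
    also have "map g (map f xs) = map (compose (carrier A) g f) xs"
      using xs(2) by (auto simp: compose_def)
    finally show ?thesis .
  qed
  then show ?thesis
    using assms(2,3) by (auto simp: hom_def compose_def)
qed

lemma free_on_ex1_hom:
  "free_on ar E A X \<Longrightarrow> in_variety ar E B \<Longrightarrow> g \<in> X \<rightarrow> carrier B \<Longrightarrow>
   \<exists>!h. hom ar A B h \<and> (\<forall>x\<in>X. h x = g x)"
  by (simp add: free_on_def)

lemma fg_free_in_variety: "fg_free ar E A \<Longrightarrow> in_variety ar E A"
  by (auto simp: fg_free_def free_on_def)

lemma alpha_ex1:
  assumes "free_on ar E A0 {x0}" "in_variety ar E A" "a \<in> carrier A"
  shows "\<exists>!h. hom ar A0 A h \<and> h x0 = a"
  using free_on_ex1_hom[OF assms(1,2), of "\<lambda>_. a"] assms(3) by simp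

lemma
  assumes "free_on ar E A0 {x0}" "in_variety ar E A" "a \<in> carrier A"
  shows hom_alpha: "hom ar A0 A (alpha ar A0 x0 A a)"
    and alpha_x0: "alpha ar A0 x0 A a x0 = a"
  using theI'[OF alpha_ex1[OF assms]] by (simp_all add: alpha_def)

lemma alpha_eqI:
  assumes "free_on ar E A0 {x0}" "in_variety ar E A" "hom ar A0 A h"
  shows "alpha ar A0 x0 A (h x0) = h"
proof -
  have "h x0 \<in> carrier A"
    using assms(1,3) by (auto simp: free_on_def intro: hom_closed)
  then show ?thesis
    unfolding alpha_def using the1_equality[OF alpha_ex1[OF assms(1,2)]] assms(3) by blast
qed

lemma alpha_hom_image:
  assumes A0: "free_on ar E A0 {x0}" and A: "in_variety ar E A" and B: "in_variety ar E B"
    and h: "hom ar A B h" and a: "a \<in> carrier A"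
  shows "alpha ar A0 x0 B (h a) = compose (carrier A0) h (alpha ar A0 x0 A a)"
proof -
  have x0: "x0 \<in> carrier A0"
    using A0 by (simp add: free_on_def)
  have "is_alg ar A0"
    using A0 by (simp add: free_on_def in_variety_def)
  then have "hom ar A0 B (compose (carrier A0) h (alpha ar A0 x0 A a))"
    using hom_compose hom_alpha[OF A0 A a] h by blast
  from alpha_eqI[OF A0 B this] show ?thesis
    using x0 alpha_x0[OF A0 A a] by (simp add: compose_def)
qed

lemma hom_eta0:
  assumes "free_on ar E B Y" "in_variety ar E A0" "x0 \<in> carrier A0"
  shows "hom ar B A0 (eta0 ar A0 x0 B Y)"
proof -
  have "\<exists>!h. hom ar B A0 h \<and> (\<forall>y\<in>Y. h y = x0)"
    using free_on_ex1_hom[OF assms(1,2), of "\<lambda>_. x0"] assms(3) by simp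
  from theI'[OF this] show ?thesis
    unfolding eta0_def by blast
qed

lemma is_functor_obj: "is_functor ar Obj FO FM \<Longrightarrow> A \<in> Obj \<Longrightarrow> FO A \<in> Obj"
  by (simp add: is_functor_def)

lemma is_functor_hom:
  "is_functor ar Obj FO FM \<Longrightarrow> A \<in> Obj \<Longrightarrow> B \<in> Obj \<Longrightarrow> hom ar A B h \<Longrightarrow>
   hom ar (FO A) (FO B) (FM A B h)"
  by (simp add: is_functor_def)

lemma is_functor_compose:
  "is_functor ar Obj FO FM \<Longrightarrow> A \<in> Obj \<Longrightarrow> B \<in> Obj \<Longrightarrow> C \<in> Obj \<Longrightarrow>
   hom ar A B h \<Longrightarrow> hom ar B C g \<Longrightarrow>
   FM A C (compose (carrier A) g h) = compose (carrier (FO A)) (FM B C g) (FM A B h)"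
  unfolding is_functor_def by blast

lemma is_automorphism_full:
  assumes aut: "is_automorphism ar Obj FO FM GO GM" and A: "A \<in> Obj" and B: "B \<in> Obj"
    and \<gamma>: "hom ar (FO A) (FO B) \<gamma>"
  obtains h where "hom ar A B h" "FM A B h = \<gamma>"
proof
  have G: "is_functor ar Obj GO GM" and FA: "FO A \<in> Obj" and FB: "FO B \<in> Obj"
    using aut A B by (auto simp: is_automorphism_def is_functor_def)
  have GF: "GO (FO A) = A" "GO (FO B) = B"
    using aut A B by (simp_all add: is_automorphism_def)
  show "hom ar A B (GM (FO A) (FO B) \<gamma>)"
    using is_functor_hom[OF G FA FB \<gamma>] by (simp add: GF)
  show "FM A B (GM (FO A) (FO B) \<gamma>) = \<gamma>"
    using aut FA FB \<gamma> GF unfolding is_automorphism_def by metis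
qed

locale free_category_automorphism =
  fixes ar :: "'f \<Rightarrow> nat"
    and E :: "(('f,nat) trm \<times> ('f,nat) trm) set"
    and Obj :: "('f,'u) alg set"
    and A0 :: "('f,'u) alg"
    and x0 :: 'u
    and FO GO :: "('f,'u) alg \<Rightarrow> ('f,'u) alg"
    and FM GM :: "('f,'u) alg \<Rightarrow> ('f,'u) alg \<Rightarrow> ('u \<Rightarrow> 'u) \<Rightarrow> ('u \<Rightarrow> 'u)"
    and Y :: "'u set"
  assumes objs: "Obj \<subseteq> {B. fg_free ar E B}"
    and A0_obj: "A0 \<in> Obj" and A0_free: "free_on ar E A0 {x0}"
    and aut: "is_automorphism ar Obj FO FM GO GM"
    and Y_basis: "free_on ar E (GO A0) Y"
begin

abbreviation s :: "('f,'u) alg \<Rightarrow> 'u \<Rightarrow> 'u" where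
  "s \<equiv> main_fun ar A0 x0 FM GO Y"

abbreviation eta :: 'u where
  "eta \<equiv> FM (GO A0) A0 (eta0 ar A0 x0 (GO A0) Y) x0"

lemma functor_FO: "is_functor ar Obj FO FM"
  using aut by (simp add: is_automorphism_def)

lemma obj_in_variety: "A \<in> Obj \<Longrightarrow> in_variety ar E A"
  using objs fg_free_in_variety by blast

lemma s_eq: "s A a = FM A0 A (alpha ar A0 x0 A a) eta"
  by (simp add: main_fun_def)

lemma eta_in_carrier: "eta \<in> carrier (FO A0)"
proof -
  have x0: "x0 \<in> carrier A0"
    using A0_free by (simp add: free_on_def)
  have G: "is_functor ar Obj GO GM" and FG: "FO (GO A0) = A0"
    using aut A0_obj by (simp_all add: is_automorphism_def)
  have "GO A0 \<in> Obj"
    using is_functor_obj[OF G A0_obj] .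
  from is_functor_hom[OF functor_FO this A0_obj hom_eta0[OF Y_basis obj_in_variety[OF A0_obj] x0]]
  show ?thesis
    using x0 FG by (auto intro: hom_closed)
qed

lemma s_in_carrier:
  assumes A: "A \<in> Obj" and a: "a \<in> carrier A"
  shows "s A a \<in> carrier (FO A)"
  using is_functor_hom[OF functor_FO A0_obj A hom_alpha[OF A0_free obj_in_variety[OF A] a]]
    eta_in_carrier by (auto simp: s_eq intro: hom_closed)

lemma s_natural:
  assumes A: "A \<in> Obj" and B: "B \<in> Obj" and h: "hom ar A B h" and a: "a \<in> carrier A"
  shows "s B (h a) = FM A B h (s A a)"
proof -
  let ?\<alpha> = "alpha ar A0 x0 A a"
  have \<alpha>: "hom ar A0 A ?\<alpha>"
    using hom_alpha[OF A0_free obj_in_variety[OF A] a] .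
  have "s B (h a) = FM A0 B (compose (carrier A0) h ?\<alpha>) eta"
    by (simp add: s_eq alpha_hom_image[OF A0_free obj_in_variety[OF A] obj_in_variety[OF B] h a])
  also have "\<dots> = FM A B h (FM A0 A ?\<alpha> eta)"
    using is_functor_compose[OF functor_FO A0_obj A B \<alpha> h] eta_in_carrier by (simp add: compose_def)
  finally show ?thesis
    by (simp add: s_eq)
qed

lemma s_surj_if_basis_value:
  assumes A: "A \<in> Obj" and X: "free_on ar E (FO A) X"
    and a: "a \<in> carrier A" and sa: "s A a \<in> X"
  shows "s A ` carrier A = carrier (FO A)"
proof
  show "s A ` carrier A \<subseteq> carrier (FO A)"
    using s_in_carrier[OF A] by blast
  show "carrier (FO A) \<subseteq> s A ` carrier A"
  proof
    fix b assume b: "b \<in> carrier (FO A)"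
    have FA: "FO A \<in> Obj"
      using is_functor_obj[OF functor_FO A] .
    obtain \<gamma> where \<gamma>: "hom ar (FO A) (FO A) \<gamma>" and \<gamma>X: "\<forall>x\<in>X. \<gamma> x = b"
      using free_on_ex1_hom[OF X obj_in_variety[OF FA], of "\<lambda>_. b"] b by auto
    obtain h where h: "hom ar A A h" and Fh: "FM A A h = \<gamma>"
      using is_automorphism_full[OF aut A A \<gamma>] .
    have "s A (h a) = b"
      using s_natural[OF A A h a] Fh \<gamma>X sa by simp
    then show "b \<in> s A ` carrier A"
      using hom_closed[OF h a] by blast
  qed
qed

end

theorem proposition4:
  fixes ar :: "'f \<Rightarrow> nat"
    and E :: "(('f,nat) trm \<times> ('f,nat) trm) set"
    and Obj :: "('f,'u) alg set"
    and A0 A :: "('f,'u) alg"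
    and x0 :: 'u
    and FO GO :: "('f,'u) alg \<Rightarrow> ('f,'u) alg"
    and FM GM :: "('f,'u) alg \<Rightarrow> ('f,'u) alg \<Rightarrow> ('u \<Rightarrow> 'u) \<Rightarrow> ('u \<Rightarrow> 'u)"
    and Y X :: "'u set"
  assumes variety: "is_variety ar E"
    and universe_large: "\<exists>i :: ('f,nat) trm \<Rightarrow> 'u. inj i"
    and objs: "Obj \<subseteq> {B. fg_free ar E B}"
    and A0_obj: "A0 \<in> Obj" and A0_free: "free_on ar E A0 {x0}"
    and aut: "is_automorphism ar Obj FO FM GO GM"
    and Y_basis: "free_on ar E (GO A0) Y"
    and Y_conv: "FO A0 = A0 \<longrightarrow> Y = {x0}"
    and A_obj: "A \<in> Obj"
    and X_basis: "free_on ar E (FO A) X"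
  shows "X \<inter> main_fun ar A0 x0 FM GO Y A ` carrier A = {}
         \<or> main_fun ar A0 x0 FM GO Y A ` carrier A = carrier (FO A)"
proof -
  interpret free_category_automorphism ar E Obj A0 x0 FO GO FM GM Y
    using objs A0_obj A0_free aut Y_basis by unfold_locales
  show ?thesis
    using s_surj_if_basis_value[OF A_obj X_basis] by blast
qed

end
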